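(* Let $\lambda$ be a typical dominant weight. Then $$\frac{\varphi_{\lambda+\rho}(L'_0)}{\varphi_{\lambda+\rho}(L'_1)\,\varphi_\rho(L'_0)}\in h^{-k_{\mathfrak g}}\mathbb C[[h]],$$ where $k_{\mathfrak g}=|\Delta^+_{\bar1}|$ is the number of odd positive roots.
   Context: Let $\mathfrak g$ be $\mathfrak{sl}(m|n)$ with $m\neq n$, or $\mathfrak{osp}(2|2n)$, with distinguished Borel subalgebra, Cartan subalgebra $\mathfrak h$, Chevalley generators $h_i$, Cartan matrix $(a_{ij})$, exactly one odd simple root (index $s$). $\langle\cdot,\cdot\rangle$ is the form on $\mathfrak h$ with $\langle h_i,h_j\rangle=d_j^{-1}a_{ij}$ ($(d_ia_{ij})$ symmetric, $d_1=1$) and the induced form on $\mathfrak h^*$. $\Delta^+_{\bar0},\Delta^+_{\bar1}$: even/odd positive roots; $\rho$ = half sum of $\Delta^+_{\bar0}$ minus half sum of $\Delta^+_{\bar1}$. A weight $\lambda$ is dominant if $\lambda(h_i)\in\mathbb N$ for $i\ne s$, typical if moreover $\langle\lambda+\rho,\alpha\rangle\neq0$ for all $\alpha\in\Delta^+_{\bar1}$. $L'_0=\prod_{\alpha\in\Delta^+_{\bar0}}(e^{\alpha/2}-e^{-\alpha/2})$, $L'_1=\prod_{\alpha\in\Delta^+_{\bar1}}(e^{\alpha/2}-e^{-\alpha/2})$ in the group ring of weights; for a weight $\beta$, $\varphi_\beta$ is the ring map $e^{\alpha}\mapsto q^{2\langle\alpha,\beta\rangle}=e^{\langle\alpha,\beta\rangle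 h}$ into $\mathbb C[[h]]$ (so the quotient is taken in $\mathbb C((h))$). *)

theory Defs
  imports Complex_Main "HOL-Library.Poly_Mapping" "HOL-Library.Function_Algebras"
    "HOL-Computational_Algebra.Formal_Laurent_Series"
begin

text \<open>Weights are written in coordinates: a weight is a function nat => complex
  (only finitely many coordinates matter).  For sl(m|n) coordinates 0..m-1 are the
  epsilon_i and m..m+n-1 the delta_j (dual to the diagonal matrix units);
  for osp(2|2n) coordinate 0 is epsilon and 1..n are delta_1..delta_n.\<close>

type_synonym wt = "nat \<Rightarrow> complex"

datatype superalg = SL nat nat | OSP2 nat

definition valid_alg :: "superalg \<Rightarrow> bool" where
  "valid_alg g = (case g of SL m n \<Rightarrow> 1 \<le> m \<and> 1 \<le> n \<and> m \<noteq> n | OSP2 n \<Rightarrow> 1 \<le> n)"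

definition ee :: "nat \<Rightarrow> wt" where
  "ee k = (\<lambda>i. if i = k then 1 else 0)"

fun dimc :: "superalg \<Rightarrow> nat" where
  "dimc (SL m n) = m + n"
| "dimc (OSP2 n) = n + 1"

text \<open>The invariant (super)trace form induced on weights.\<close>
fun form :: "superalg \<Rightarrow> wt \<Rightarrow> wt \<Rightarrow> complex" where
  "form (SL m n) \<mu> \<nu> = (\<Sum>i<m. \<mu> i * \<nu> i) - (\<Sum>j<n. \<mu> (m+j) * \<nu> (m+j))"
| "form (OSP2 n) \<mu> \<nu> = \<mu> 0 * \<nu> 0 - (\<Sum>j\<in>{1..n}. \<mu> j * \<nu> j)"

text \<open>Even positive roots (distinguished Borel).\<close>
fun even_pos :: "superalg \<Rightarrow> wt set" where
  "even_pos (SL m n) =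
     {ee i - ee j | i j. i < j \<and> j < m} \<union> {ee (m+i) - ee (m+j) | i j. i < j \<and> j < n}"
| "even_pos (OSP2 n) =
     {ee i - ee j | i j. 1 \<le> i \<and> i < j \<and> j \<le> n} \<union>
     {ee i + ee j | i j. 1 \<le> i \<and> i < j \<and> j \<le> n} \<union>
     {ee i + ee i | i. 1 \<le> i \<and> i \<le> n}"

text \<open>Odd positive roots (distinguished Borel).\<close>
fun odd_pos :: "superalg \<Rightarrow> wt set" where
  "odd_pos (SL m n) = {ee i - ee (m+j) | i j. i < m \<and> j < n}"
| "odd_pos (OSP2 n) = {ee 0 - ee i | i. 1 \<le> i \<and> i \<le> n} \<union> {ee 0 + ee i | i. 1 \<le> i \<and> i \<le> n}"

text \<open>The Chevalley generators h_i (i distinct from the odd index s), as vectors in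
  the Cartan subalgebra written in the coordinates dual to those of weights.
  sl(m|n): h_i = E_ii - E_(i+1)(i+1) for the even simple roots;
  osp(2|2n): h for delta_i - delta_(i+1) and for 2 delta_n.\<close>
fun even_coroots :: "superalg \<Rightarrow> wt set" where
  "even_coroots (SL m n) =
     {ee i - ee (i+1) | i. i + 1 < m} \<union> {ee (m+j) - ee (m+j+1) | j. j + 1 < n}"
| "even_coroots (OSP2 n) = {ee i - ee (i+1) | i. 1 \<le> i \<and> i + 1 \<le> n} \<union> {ee n}"

definition evalh :: "superalg \<Rightarrow> wt \<Rightarrow> wt \<Rightarrow> complex" where
  "evalh g la h = (\<Sum>k<dimc g. la k * h k)"

definition rho :: "superalg \<Rightarrow> wt" where
  "rho g = (\<lambda>i. ((\<Sum>\<alpha>\<in>even_pos g. \<alpha> i) - (\<Sum>\<alpha>\<in>odd_pos g. \<alpha> i)) / 2)"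

definition dominant :: "superalg \<Rightarrow> wt \<Rightarrow> bool" where
  "dominant g la = (\<forall>h\<in>even_coroots g. evalh g la h \<in> \<nat>)"

definition typical :: "superalg \<Rightarrow> wt \<Rightarrow> bool" where
  "typical g la = (dominant g la \<and> (\<forall>\<alpha>\<in>odd_pos g. form g (la + rho g) \<alpha> \<noteq> 0))"

text \<open>Group ring of weights: finitely supported functions wt =>0 complex with
  convolution product; e^mu is Poly_Mapping.single mu 1.\<close>
definition expw :: "wt \<Rightarrow> (wt \<Rightarrow>\<^sub>0 complex)" where
  "expw \<mu> = Poly_Mapping.single \<mu> 1"

definition halfw :: "wt \<Rightarrow> wt" where
  "halfw \<alpha> = (\<lambda>i. \<alpha> i / 2)"

definition L0 :: "superalg \<Rightarrow> (wt \<Rightarrow>\<^sub>0 complex)" where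
  "L0 g = (\<Prod>\<alpha>\<in>even_pos g. expw (halfw \<alpha>) - expw (- halfw \<alpha>))"

definition L1 :: "superalg \<Rightarrow> (wt \<Rightarrow>\<^sub>0 complex)" where
  "L1 g = (\<Prod>\<alpha>\<in>odd_pos g. expw (halfw \<alpha>) - expw (- halfw \<alpha>))"

definition phi :: "superalg \<Rightarrow> wt \<Rightarrow> (wt \<Rightarrow>\<^sub>0 complex) \<Rightarrow> complex fps" where
  "phi g \<beta> f = (\<Sum>\<mu>\<in>Poly_Mapping.keys f. fps_const (Poly_Mapping.lookup f \<mu>) * fps_exp (form g \<mu> \<beta>))"

end

theory Submission
  imports Defs
begin

text \<open>The map \<phi> for \<beta> sends each factor e^(\<alpha>/2) - e^(-\<alpha>/2) to e^(c h/2) - e^(-c h/2) = h u,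
  where c = \<langle>\<alpha>,\<beta>\<rangle> and u is a power series with constant term c. So a product over a
  set S of roots goes to h^|S| times a series with constant term the product of the \<langle>\<alpha>,\<beta>\<rangle>.
  The powers of h coming from the even roots cancel between the numerator and the value of L'0
  at \<rho>, leaving h^(-k) times a quotient of power series whose denominator is a unit: its
  constant term is the product of the \<langle>\<lambda>+\<rho>,\<alpha>\<rangle> over odd \<alpha>, nonzero by typicality, and of
  the \<langle>\<rho>,\<alpha>\<rangle> over even \<alpha>, nonzero by an explicit computation of \<rho>.\<close>

section \<open>The specialisation maps \<phi>\<close>

lemma form_add: "form g (\<mu> + \<nu>) \<beta> = form g \<mu> \<beta> + form g \<nu> \<beta>"
  by (cases g) (auto simp: sum.distrib algebra_simps)

lemma form_zero: "form g 0 \<beta> = 0"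
  by (cases g) simp_all

lemma form_uminus: "form g (- \<mu>) \<beta> = - form g \<mu> \<beta>"
  by (cases g) (auto simp: sum_negf algebra_simps)

lemma form_diff: "form g (\<mu> - \<nu>) \<beta> = form g \<mu> \<beta> - form g \<nu> \<beta>"
  using form_add[of g \<mu> "- \<nu>"] by (simp add: form_uminus)

lemma form_halfw: "form g (halfw \<mu>) \<beta> = form g \<mu> \<beta> / 2"
  by (cases g) (auto simp: halfw_def sum_divide_distrib diff_divide_distrib)

lemma form_commute: "form g \<mu> \<nu> = form g \<nu> \<mu>"
  by (cases g) (simp_all add: mult.commute)

lemma phi_eq_sum_superset:
  assumes "finite S" "Poly_Mapping.keys p \<subseteq> S"
  shows "phi g \<beta> p = (\<Sum>\<mu>\<in>S. fps_const (Poly_Mapping.lookup p \<mu>) * fps_exp (form g \<mu> \<beta>))"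
  unfolding phi_def
  by (rule sum.mono_neutral_left) (use assms in \<open>auto simp: in_keys_iff\<close>)

lemma phi_add: "phi g \<beta> (p + q) = phi g \<beta> p + phi g \<beta> q"
proof -
  let ?S = "Poly_Mapping.keys p \<union> Poly_Mapping.keys q"
  have "phi g \<beta> (p + q) =
      (\<Sum>\<mu>\<in>?S. fps_const (Poly_Mapping.lookup (p + q) \<mu>) * fps_exp (form g \<mu> \<beta>))"
    by (rule phi_eq_sum_superset) (use keys_add[of p q] in auto)
  also have "\<dots> = (\<Sum>\<mu>\<in>?S. fps_const (Poly_Mapping.lookup p \<mu>) * fps_exp (form g \<mu> \<beta>))
      + (\<Sum>\<mu>\<in>?S. fps_const (Poly_Mapping.lookup q \<mu>) * fps_exp (form g \<mu> \<beta>))"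
    by (simp add: lookup_add distrib_right sum.distrib flip: fps_const_add)
  also have "\<dots> = phi g \<beta> p + phi g \<beta> q"
    by (subst (1 2) phi_eq_sum_superset[of ?S]) auto
  finally show ?thesis .
qed

lemma phi_uminus: "phi g \<beta> (- p) = - phi g \<beta> p"
  by (simp add: phi_def sum_negf flip: fps_const_neg)

lemma phi_diff: "phi g \<beta> (p - q) = phi g \<beta> p - phi g \<beta> q"
  using phi_add[of g \<beta> p "- q"] by (simp add: phi_uminus)

lemma phi_sum: "phi g \<beta> (sum F S) = (\<Sum>x\<in>S. phi g \<beta> (F x))"
  by (induction S rule: infinite_finite_induct) (simp_all add: phi_add phi_def[where f = 0])

lemma phi_single: "phi g \<beta> (Poly_Mapping.single \<mu> c) = fps_const c * fps_exp (form g \<mu> \<beta>)"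
  by (simp add: phi_def)

lemma phi_single_mult:
  "phi g \<beta> (Poly_Mapping.single \<mu> c * Poly_Mapping.single \<nu> d) =
     phi g \<beta> (Poly_Mapping.single \<mu> c) * phi g \<beta> (Poly_Mapping.single \<nu> d)"
  by (simp add: mult_single phi_single form_add fps_exp_add_mult mult_ac flip: fps_const_mult)

lemma poly_mapping_eq_sum_single:
  "p = (\<Sum>\<mu>\<in>Poly_Mapping.keys p. Poly_Mapping.single \<mu> (Poly_Mapping.lookup p \<mu>))"
  by (rule poly_mapping_eqI)
     (auto simp: lookup_sum lookup_single when_def in_keys_iff sum.delta)

lemma phi_mult: "phi g \<beta> (p * q) = phi g \<beta> p * phi g \<beta> q"
proof -
  let ?p = "\<lambda>\<mu>. Poly_Mapping.single \<mu> (Poly_Mapping.lookup p \<mu>)"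
  let ?q = "\<lambda>\<nu>. Poly_Mapping.single \<nu> (Poly_Mapping.lookup q \<nu>)"
  have "phi g \<beta> (sum ?p (Poly_Mapping.keys p) * sum ?q (Poly_Mapping.keys q)) =
      phi g \<beta> (sum ?p (Poly_Mapping.keys p)) * phi g \<beta> (sum ?q (Poly_Mapping.keys q))"
    by (simp add: sum_product phi_sum phi_single_mult)
  then show ?thesis
    by (simp flip: poly_mapping_eq_sum_single)
qed

lemma phi_prod: "phi g \<beta> (prod F S) = (\<Prod>x\<in>S. phi g \<beta> (F x))"
  by (induction S rule: infinite_finite_induct) (simp_all add: phi_mult phi_single form_zero flip: single_one)

text \<open>The series (e^(c h/2) - e^(-c h/2)) / h; the division by h is exact since the
  numerator has no constant term.\<close>

definition weyl_factor_fps :: "complex \<Rightarrow> complex fps" where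
  "weyl_factor_fps c = fps_shift 1 (fps_exp (c / 2) - fps_exp (- (c / 2)))"

lemma fps_X_mult_weyl_factor_fps:
  "fps_X * weyl_factor_fps c = fps_exp (c / 2) - fps_exp (- (c / 2))"
  by (simp add: fps_eq_iff weyl_factor_fps_def)

lemma weyl_factor_fps_nth_0 [simp]: "weyl_factor_fps c $ 0 = c"
  by (simp add: weyl_factor_fps_def)

lemma fps_prod_nth_0: "(\<Prod>x\<in>S. f x) $ 0 = (\<Prod>x\<in>S. (f x :: 'a :: comm_ring_1 fps) $ 0)"
  by (induction S rule: infinite_finite_induct) auto

lemma phi_weyl_product:
  "phi g \<beta> (\<Prod>\<alpha>\<in>S. expw (halfw \<alpha>) - expw (- halfw \<alpha>)) =
     fps_X ^ card S * (\<Prod>\<alpha>\<in>S. weyl_factor_fps (form g \<alpha> \<beta>))"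
  by (simp add: phi_prod phi_diff phi_single expw_def form_uminus form_halfw prod.distrib
      flip: fps_X_mult_weyl_factor_fps)

lemma fls_divide_X_power_mult:
  fixes A B C :: "complex fps"
  assumes "B $ 0 \<noteq> 0" "C $ 0 \<noteq> 0"
  shows "fps_to_fls (fps_X ^ n * A) / (fps_to_fls (fps_X ^ m * B) * fps_to_fls (fps_X ^ n * C))
     = fls_X_intpow (- int m) * fps_to_fls (A / (B * C))"
proof -
  have X_power: "fps_to_fls (fps_X ^ k :: complex fps) = fls_X_intpow (int k)" for k
    by (simp add: fps_to_fls_power fls_X_power_conv_shift_1)
  have "fps_to_fls (fps_X ^ n * A) / (fps_to_fls (fps_X ^ m * B) * fps_to_fls (fps_X ^ n * C))
      = (fls_X_intpow (int n) * fps_to_fls A) /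
          (fls_X_intpow (int m) * (fls_X_intpow (int n) * fps_to_fls (B * C)))"
    by (simp add: X_power fls_times_fps_to_fls mult_ac)
  also have "\<dots> = (fps_to_fls A / fps_to_fls (B * C)) / fls_X_intpow (int m)"
    by simp
  also have "fps_to_fls A / fps_to_fls (B * C) = fps_to_fls (A / (B * C))"
    using assms by (intro fls_divide_fps_to_fls) simp
  finally show ?thesis
    by (simp add: fls_divide_X_intpow_conv_times mult.commute)
qed

section \<open>The Weyl vector \<rho>\<close>

lemma ee_apply: "ee i k = (if i = k then 1 else 0)"
  by (simp add: ee_def)

lemma ee_eq_iff: "ee i = ee j \<longleftrightarrow> i = j"
  by (auto simp: ee_def fun_eq_iff)

lemma sum_ee_mult:
  assumes "finite A"
  shows "(\<Sum>k\<in>A. ee i k * f k) = (if i \<in> A then f i else 0)"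
proof -
  have "ee i k * f k = (if i = k then f k else 0)" for k
    by (simp add: ee_apply)
  with assms show ?thesis
    by (simp add: sum.delta')
qed

lemma ee_shift_apply: "ee (m + i) (m + k) = ee i k"
  by (simp add: ee_apply)

lemma sum_ee_apply:
  assumes "finite P"
  shows "(\<Sum>p\<in>P. ee (h p) k) = of_nat (card {p\<in>P. h p = k})"
  using assms by (simp add: ee_apply sum.If_cases Int_def conj_commute)

lemma setcompr_pair_eq_image: "{f i j | i j. P i j} = (\<lambda>(i, j). f i j) ` {(i, j). P i j}"
  by auto

lemma ee_diff_eq_ee_diff_iff:
  assumes "i \<noteq> j" "i' \<noteq> j'"
  shows "ee i - ee j = ee i' - ee j' \<longleftrightarrow> i = i' \<and> j = j'"
proof
  assume "ee i - ee j = ee i' - ee j'"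
  then have "(ee i - ee j) i = (ee i' - ee j') i" "(ee i - ee j) j = (ee i' - ee j') j"
    by simp_all
  with assms show "i = i' \<and> j = j'"
    by (auto simp: ee_apply split: if_splits)
qed simp

lemma ee_add_eq_ee_add_iff:
  assumes "i < j" "i' < j'"
  shows "ee i + ee j = ee i' + ee j' \<longleftrightarrow> i = i' \<and> j = j'"
proof
  assume "ee i + ee j = ee i' + ee j'"
  then have "(ee i + ee j) i = (ee i' + ee j') i" "(ee i + ee j) j = (ee i' + ee j') j"
    by simp_all
  with assms show "i = i' \<and> j = j'"
    by (auto simp: ee_apply split: if_splits)
qed simp

lemma ee_diff_neq_ee_add:
  assumes "i \<noteq> j"
  shows "ee i - ee j \<noteq> ee i' + ee j'"
proof
  assume "ee i - ee j = ee i' + ee j'"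
  then have "(ee i - ee j) j = (ee i' + ee j') j"
    by simp
  with assms show False
    by (simp add: ee_apply split: if_splits)
qed

lemma ee_add_neq_ee_double:
  assumes "i \<noteq> j"
  shows "ee i + ee j \<noteq> ee l + ee l"
proof
  assume "ee i + ee j = ee l + ee l"
  then have "(ee i + ee j) i = (ee l + ee l) i"
    by simp
  with assms show False
    by (simp add: ee_apply split: if_splits)
qed

lemma finite_ordered_pairs: "finite {(i, j). a \<le> i \<and> i < j \<and> j < (b::nat)}"
  by (rule finite_subset[of _ "{..<b} \<times> {..<b}"]) auto

lemma sum_ordered_pairs_ee_fst:
  "(\<Sum>p\<in>{(i, j). a \<le> i \<and> i < j \<and> j < b}. ee (fst p) k) =
     (if a \<le> k \<and> k < b then of_nat b - 1 - of_nat k else 0)"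
proof -
  have "{p \<in> {(i, j). a \<le> i \<and> i < j \<and> j < b}. fst p = k} =
      (if a \<le> k \<and> k < b then {k} \<times> {k<..<b} else {})"
    by auto
  then show ?thesis
    by (simp add: sum_ee_apply[OF finite_ordered_pairs])
qed

lemma sum_ordered_pairs_ee_snd:
  "(\<Sum>p\<in>{(i, j). a \<le> i \<and> i < j \<and> j < b}. ee (snd p) k) =
     (if a \<le> k \<and> k < b then of_nat k - of_nat a else 0)"
proof -
  have "{p \<in> {(i, j). a \<le> i \<and> i < j \<and> j < b}. snd p = k} =
      (if a \<le> k \<and> k < b then {a..<k} \<times> {k} else {})"
    by auto
  then show ?thesis
    by (simp add: sum_ee_apply[OF finite_ordered_pairs])
qed

lemma finite_diff_roots: "finite {ee i - ee j | i j. a \<le> i \<and> i < j \<and> j < b}"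
  by (simp add: setcompr_pair_eq_image finite_ordered_pairs)

lemma finite_add_roots: "finite {ee i + ee j | i j. a \<le> i \<and> i < j \<and> j < b}"
  by (simp add: setcompr_pair_eq_image finite_ordered_pairs)

lemma sum_diff_roots_apply:
  "(\<Sum>\<alpha>\<in>{ee i - ee j | i j. a \<le> i \<and> i < j \<and> j < b}. \<alpha> k) =
     (if a \<le> k \<and> k < b then of_nat (a + b) - 1 - 2 * of_nat k else 0)"
proof -
  have inj: "inj_on (\<lambda>(i, j). ee i - ee j) {(i, j). a \<le> i \<and> i < j \<and> j < b}"
    by (auto simp: inj_on_def ee_diff_eq_ee_diff_iff)
  show ?thesis
    unfolding setcompr_pair_eq_image sum.reindex[OF inj]
    by (simp add: case_prod_beta sum_subtractf
        sum_ordered_pairs_ee_fst sum_ordered_pairs_ee_snd)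
qed

lemma sum_add_roots_apply:
  "(\<Sum>\<alpha>\<in>{ee i + ee j | i j. a \<le> i \<and> i < j \<and> j < b}. \<alpha> k) =
     (if a \<le> k \<and> k < b then of_nat b - of_nat a - 1 else 0)"
proof -
  have inj: "inj_on (\<lambda>(i, j). ee i + ee j) {(i, j). a \<le> i \<and> i < j \<and> j < b}"
    by (auto simp: inj_on_def ee_add_eq_ee_add_iff)
  show ?thesis
    unfolding setcompr_pair_eq_image sum.reindex[OF inj]
    by (simp add: case_prod_beta sum.distrib
        sum_ordered_pairs_ee_fst sum_ordered_pairs_ee_snd)
qed

lemma sum_double_roots_apply:
  "(\<Sum>\<alpha>\<in>{ee i + ee i | i. a \<le> i \<and> i < b}. \<alpha> k) = (if a \<le> k \<and> k < b then 2 else 0)"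
proof -
  have eq: "{ee i + ee i | i. a \<le> i \<and> i < b} = (\<lambda>i. ee i + ee i) ` {a..<b}"
    by auto
  have inj: "inj_on (\<lambda>i. ee i + ee i) {a..<b}"
  proof (rule inj_onI)
    fix i j assume "ee i + ee i = ee j + ee j"
    then have "(ee i + ee i) i = (ee j + ee j) i"
      by simp
    then show "i = j"
      by (simp add: ee_apply split: if_splits)
  qed
  show ?thesis
    unfolding eq sum.reindex[OF inj] by (simp add: ee_apply flip: sum_distrib_left)
qed

lemma sum_odd_roots_SL_apply:
  "(\<Sum>\<alpha>\<in>odd_pos (SL m n). \<alpha> k) =
     (if k < m then of_nat n else if k < m + n then - of_nat m else 0)"
proof -
  define P where "P = {..<m} \<times> {..<n}"
  have eq: "{ee i - ee (m + j) | i j. i < m \<and> j < n} = (\<lambda>(i, j). ee i - ee (m + j)) ` P"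
    by (auto simp: P_def)
  have inj: "inj_on (\<lambda>(i, j). ee i - ee (m + j)) P"
    by (auto simp: inj_on_def P_def ee_diff_eq_ee_diff_iff)
  have "{p \<in> P. fst p = k} = (if k < m then {k} \<times> {..<n} else {})"
    "{p \<in> P. m + snd p = k} = (if m \<le> k \<and> k < m + n then {..<m} \<times> {k - m} else {})"
    by (auto simp: P_def)
  then show ?thesis
    unfolding odd_pos.simps eq sum.reindex[OF inj]
    by (simp add: P_def sum_ee_apply case_prod_beta sum_subtractf)
qed

lemma sum_odd_roots_OSP2_apply:
  "(\<Sum>\<alpha>\<in>odd_pos (OSP2 n). \<alpha> k) = (if k = 0 then 2 * of_nat n else 0)"
proof -
  let ?X = "(\<lambda>i. ee 0 - ee i) ` {1..n}" and ?Y = "(\<lambda>i. ee 0 + ee i) ` {1..n}"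
  have "odd_pos (OSP2 n) = ?X \<union> ?Y"
    by auto
  moreover have "?X \<inter> ?Y = {}"
    by (auto simp: ee_diff_neq_ee_add)
  ultimately have "(\<Sum>\<alpha>\<in>odd_pos (OSP2 n). \<alpha> k) = (\<Sum>\<alpha>\<in>?X. \<alpha> k) + (\<Sum>\<alpha>\<in>?Y. \<alpha> k)"
    by (simp add: sum.union_disjoint)
  also have "\<dots> = (\<Sum>i\<in>{1..n}. ee 0 k - ee i k) + (\<Sum>i\<in>{1..n}. ee 0 k + ee i k)"
    by (simp add: sum.reindex inj_on_def ee_eq_iff)
  finally show ?thesis
    by (simp add: sum.distrib sum_subtractf ee_apply)
qed

lemma even_pos_SL_eq:
  "even_pos (SL m n) = {ee i - ee j | i j. i < j \<and> j < m}
     \<union> {ee i - ee j | i j. m \<le> i \<and> i < j \<and> j < m + n}"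
proof -
  have "{ee (m + i) - ee (m + j) | i j. i < j \<and> j < n} =
      {ee i - ee j | i j. m \<le> i \<and> i < j \<and> j < m + n}"
  proof safe
    fix i j assume "i < j" "j < n"
    then show "\<exists>i' j'. ee (m + i) - ee (m + j) = ee i' - ee j' \<and> m \<le> i' \<and> i' < j' \<and> j' < m + n"
      by (intro exI[of _ "m + i"] exI[of _ "m + j"]) simp
  next
    fix i j assume "m \<le> i" "i < j" "j < m + n"
    then show "\<exists>i' j'. ee i - ee j = ee (m + i') - ee (m + j') \<and> i' < j' \<and> j' < n"
      by (intro exI[of _ "i - m"] exI[of _ "j - m"]) auto
  qed
  then show ?thesis
    by simp
qed

lemma sum_even_roots_SL_apply:
  "(\<Sum>\<alpha>\<in>even_pos (SL m n). \<alpha> k) =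
     (if k < m then of_nat m - 1 - 2 * of_nat k
      else if k < m + n then 2 * of_nat m + of_nat n - 1 - 2 * of_nat k else 0)"
proof -
  have "{ee i - ee j | i j. i < j \<and> j < m} \<inter>
      {ee i - ee j | i j. m \<le> i \<and> i < j \<and> j < m + n} = {}"
    by (auto simp: ee_diff_eq_ee_diff_iff)
  then show ?thesis
    unfolding even_pos_SL_eq
    using finite_diff_roots[where a = 0, simplified] finite_diff_roots
    by (simp add: sum.union_disjoint sum_diff_roots_apply[where a = 0, simplified] sum_diff_roots_apply)
qed

lemma rho_SL:
  "k < m \<Longrightarrow> rho (SL m n) k = (of_nat m - of_nat n - 1) / 2 - of_nat k"
  "j < n \<Longrightarrow> rho (SL m n) (m + j) = (of_nat m + of_nat n - 1) / 2 - of_nat j"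
  unfolding rho_def sum_even_roots_SL_apply sum_odd_roots_SL_apply by (simp_all add: field_simps)

lemma sum_even_roots_OSP2_apply:
  "(\<Sum>\<alpha>\<in>even_pos (OSP2 n). \<alpha> k) =
     (if 1 \<le> k \<and> k \<le> n then 2 * (of_nat n + 1 - of_nat k) else 0)"
proof -
  let ?A = "{ee i - ee j | i j. 1 \<le> i \<and> i < j \<and> j \<le> n}"
    and ?B = "{ee i + ee j | i j. 1 \<le> i \<and> i < j \<and> j \<le> n}"
    and ?D = "{ee i + ee i | i. 1 \<le> i \<and> i \<le> n}"
  have "finite ?A" "finite ?B"
    using finite_diff_roots[where a = 1 and b = "Suc n"] finite_add_roots[where a = 1 and b = "Suc n"]
    by (simp_all add: less_Suc_eq_le)
  moreover have "finite ?D"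
    by (rule finite_subset[of _ "(\<lambda>i. ee i + ee i) ` {..n}"]) auto
  moreover have "?A \<inter> ?B = {}" "(?A \<union> ?B) \<inter> ?D = {}"
    using ee_diff_neq_ee_add ee_add_neq_ee_double by (blast dest: less_imp_neq)+
  ultimately have split: "(\<Sum>\<alpha>\<in>even_pos (OSP2 n). \<alpha> k) =
      (\<Sum>\<alpha>\<in>?A. \<alpha> k) + (\<Sum>\<alpha>\<in>?B. \<alpha> k) + (\<Sum>\<alpha>\<in>?D. \<alpha> k)"
    by (simp add: sum.union_disjoint)
  have A: "(\<Sum>\<alpha>\<in>?A. \<alpha> k) = (if 1 \<le> k \<and> k \<le> n then of_nat n + 1 - 2 * of_nat k else 0)"
    using sum_diff_roots_apply[where a = 1 and b = "Suc n"] by (simp add: less_Suc_eq_le)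
  have B: "(\<Sum>\<alpha>\<in>?B. \<alpha> k) = (if 1 \<le> k \<and> k \<le> n then of_nat n - 1 else 0)"
    using sum_add_roots_apply[where a = 1 and b = "Suc n"] by (simp add: less_Suc_eq_le)
  have D: "(\<Sum>\<alpha>\<in>?D. \<alpha> k) = (if 1 \<le> k \<and> k \<le> n then 2 else 0)"
    using sum_double_roots_apply[where a = 1 and b = "Suc n"] by (simp add: less_Suc_eq_le)
  show ?thesis
    unfolding split A B D by simp
qed

lemma rho_OSP2:
  "rho (OSP2 n) 0 = - of_nat n"
  "1 \<le> k \<Longrightarrow> k \<le> n \<Longrightarrow> rho (OSP2 n) k = of_nat (n + 1 - k)"
  unfolding rho_def sum_even_roots_OSP2_apply sum_odd_roots_OSP2_apply by (simp_all add: of_nat_diff)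

lemma form_SL_ee:
  "i < m \<Longrightarrow> form (SL m n) (ee i) \<beta> = \<beta> i"
  "j < n \<Longrightarrow> form (SL m n) (ee (m + j)) \<beta> = - \<beta> (m + j)"
  by (simp_all add: sum_ee_mult ee_shift_apply) (simp add: ee_apply)

lemma form_OSP2_ee:
  "1 \<le> i \<Longrightarrow> i \<le> n \<Longrightarrow> form (OSP2 n) (ee i) \<beta> = - \<beta> i"
  by (simp add: sum_ee_mult) (simp add: ee_apply)

lemma form_rho_even_pos_neq_zero:
  assumes "\<alpha> \<in> even_pos g"
  shows "form g \<alpha> (rho g) \<noteq> 0"
proof (cases g)
  case (SL m n)
  with assms show ?thesis
    by (auto simp: form_diff form_SL_ee rho_SL simp del: form.simps)
next
  case (OSP2 n)
  from assms consider
      (diff) i j where "\<alpha> = ee i - ee j" "1 \<le> i" "i < j" "j \<le> n"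
    | (add) i j where "\<alpha> = ee i + ee j" "1 \<le> i" "i < j" "j \<le> n"
    | (double) i where "\<alpha> = ee i + ee i" "1 \<le> i" "i \<le> n"
    unfolding OSP2 by auto
  then show ?thesis
  proof cases
    case diff
    then show ?thesis
      by (simp add: OSP2 form_diff form_OSP2_ee rho_OSP2 del: form.simps)
  next
    case add
    then have "form g \<alpha> (rho g) = - of_nat ((n + 1 - i) + (n + 1 - j))"
      by (simp add: OSP2 form_add form_OSP2_ee rho_OSP2 del: form.simps)
    moreover have "(n + 1 - i) + (n + 1 - j) \<noteq> 0"
      using add by simp
    ultimately show ?thesis
      by (metis neg_equal_0_iff_equal of_nat_eq_0_iff)
  next
    case double
    \<comment> \<open>plain simp would first normalise ee i + ee i to 2 * ee i, out of reach of form_add\<close>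
    then have "form g \<alpha> (rho g) = - of_nat ((n + 1 - i) + (n + 1 - i))"
      by (simp only: OSP2 form_add form_OSP2_ee rho_OSP2) simp
    moreover have "(n + 1 - i) + (n + 1 - i) \<noteq> 0"
      using double by simp
    ultimately show ?thesis
      by (metis neg_equal_0_iff_equal of_nat_eq_0_iff)
  qed
qed

theorem lemma2p4:
  fixes g :: superalg and la :: wt
  assumes "valid_alg g"
    and "typical g la"
  shows "\<exists>f :: complex fps.
           fps_to_fls (phi g (la + rho g) (L0 g)) /
             (fps_to_fls (phi g (la + rho g) (L1 g)) * fps_to_fls (phi g (rho g) (L0 g)))
           = fls_X_intpow (- int (card (odd_pos g))) * fps_to_fls f"
proof -
  define A where "A = (\<Prod>\<alpha>\<in>even_pos g. weyl_factor_fps (form g \<alpha> (la + rho g)))"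
  define B where "B = (\<Prod>\<alpha>\<in>odd_pos g. weyl_factor_fps (form g \<alpha> (la + rho g)))"
  define C where "C = (\<Prod>\<alpha>\<in>even_pos g. weyl_factor_fps (form g \<alpha> (rho g)))"
  have "B $ 0 \<noteq> 0"
    using \<open>typical g la\<close> unfolding B_def fps_prod_nth_0 typical_def
    by (cases "finite (odd_pos g)") (auto simp: form_commute)
  moreover have "C $ 0 \<noteq> 0"
    unfolding C_def fps_prod_nth_0
    by (cases "finite (even_pos g)") (auto simp: form_rho_even_pos_neq_zero)
  ultimately show ?thesis
    unfolding L0_def L1_def phi_weyl_product A_def[symmetric] B_def[symmetric] C_def[symmetric]
    by (auto simp: fls_divide_X_power_mult)
qed

end
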